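(* Let $\pi$ be a set of primes, $G$ a group and $G_0$ a subgroup of finite index in $G$. Let $A$ be a $\mathbb ZG$-module that is a $\mathbb ZG_0$-module quotient of some $\mathbb ZG_0$-module whose underlying abelian group is torsion-free of finite rank and $\pi$-spectral. Then $A$ is a $\mathbb ZG$-module quotient of some $\mathbb ZG$-module whose underlying abelian group is torsion-free of finite rank and $\pi$-spectral.
   Context: An abelian group has finite rank if its torsion-free rank and all $p$-ranks are finite; it is $\pi$-spectral if every prime $p$ for which it has a section isomorphic to $\mathbb Z_{p^\infty}$ lies in $\pi$. *)

theory Defs
  imports "HOL-Algebra.Algebra" "HOL-Computational_Algebra.Primes"
begin

text \<open>A (left) ZG-module: an abelian group M (written multiplicatively, as a HOL-Algebra
  structure) together with an action of the group G on M by group automorphisms.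
  This is the same as a module over the integral group ring ZG.\<close>

definition G_module :: "('g, 'c) monoid_scheme \<Rightarrow> ('m, 'd) monoid_scheme \<Rightarrow> ('g \<Rightarrow> 'm \<Rightarrow> 'm) \<Rightarrow> bool" where
  "G_module G M act \<longleftrightarrow>
     group G \<and> comm_group M \<and>
     (\<forall>g\<in>carrier G. \<forall>x\<in>carrier M. act g x \<in> carrier M) \<and>
     (\<forall>g\<in>carrier G. \<forall>x\<in>carrier M. \<forall>y\<in>carrier M. act g (x \<otimes>\<^bsub>M\<^esub> y) = act g x \<otimes>\<^bsub>M\<^esub> act g y) \<and>
     (\<forall>x\<in>carrier M. act \<one>\<^bsub>G\<^esub> x = x) \<and>
     (\<forall>g\<in>carrier G. \<forall>h\<in>carrier G. \<forall>x\<in>carrier M. act (g \<otimes>\<^bsub>G\<^esub> h) x = act g (act h x))"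

text \<open>A surjective module homomorphism (with respect to the group elements in S):
  witnesses that A is a module quotient of M.\<close>

definition module_epi :: "'g set \<Rightarrow> ('m, 'd) monoid_scheme \<Rightarrow> ('g \<Rightarrow> 'm \<Rightarrow> 'm)
    \<Rightarrow> ('a, 'e) monoid_scheme \<Rightarrow> ('g \<Rightarrow> 'a \<Rightarrow> 'a) \<Rightarrow> ('m \<Rightarrow> 'a) \<Rightarrow> bool" where
  "module_epi S M actM A actA f \<longleftrightarrow>
     f \<in> hom M A \<and> f ` carrier M = carrier A \<and>
     (\<forall>g\<in>S. \<forall>x\<in>carrier M. f (actM g x) = actA g (f x))"

definition torsion_free :: "('m, 'd) monoid_scheme \<Rightarrow> bool" where
  "torsion_free M \<longleftrightarrow>
     (\<forall>x\<in>carrier M. \<forall>n::nat. n > 0 \<and> x [^]\<^bsub>M\<^esub> n = \<one>\<^bsub>M\<^esub> \<longrightarrow> x = \<one>\<^bsub>M\<^esub>)"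

definition Z_independent :: "('m, 'd) monoid_scheme \<Rightarrow> 'm set \<Rightarrow> bool" where
  "Z_independent M S \<longleftrightarrow> S \<subseteq> carrier M \<and>
     (\<forall>T (c :: 'm \<Rightarrow> int). finite T \<and> T \<subseteq> S \<and>
        finprod M (\<lambda>x. x [^]\<^bsub>M\<^esub> c x) T = \<one>\<^bsub>M\<^esub> \<longrightarrow> (\<forall>x\<in>T. c x = 0))"

definition finite_torsion_free_rank :: "('m, 'd) monoid_scheme \<Rightarrow> bool" where
  "finite_torsion_free_rank M \<longleftrightarrow>
     (\<exists>n::nat. \<forall>S. Z_independent M S \<longrightarrow> finite S \<and> card S \<le> n)"

text \<open>Finite p-rank: the elementary abelian subgroup of elements of order dividing p
  (an F_p-vector space whose dimension is the p-rank) is finite.\<close>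
definition finite_p_rank :: "('m, 'd) monoid_scheme \<Rightarrow> nat \<Rightarrow> bool" where
  "finite_p_rank M p \<longleftrightarrow> finite {x \<in> carrier M. x [^]\<^bsub>M\<^esub> p = \<one>\<^bsub>M\<^esub>}"

definition finite_rank :: "('m, 'd) monoid_scheme \<Rightarrow> bool" where
  "finite_rank M \<longleftrightarrow> finite_torsion_free_rank M \<and> (\<forall>p::nat. Factorial_Ring.prime p \<longrightarrow> finite_p_rank M p)"

text \<open>The Pruefer p-group Z_{p^\<infinity>} = Z[1/p]/Z, realised as the rationals in [0,1)
  with p-power denominators under addition modulo 1.\<close>
definition prufer :: "nat \<Rightarrow> rat monoid" where
  "prufer p = \<lparr> carrier = {q::rat. 0 \<le> q \<and> q < 1 \<and> (\<exists>k::nat. q * of_nat (p ^ k) \<in> \<int>)},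
               monoid.mult = (\<lambda>x y. frac (x + y)),
               one = 0 \<rparr>"

definition has_prufer_section :: "('m, 'd) monoid_scheme \<Rightarrow> nat \<Rightarrow> bool" where
  "has_prufer_section M p \<longleftrightarrow>
     (\<exists>H K. subgroup H M \<and> subgroup K M \<and> K \<subseteq> H \<and>
        ((M\<lparr>carrier := H\<rparr>) Mod K) \<cong> prufer p)"

definition pi_spectral :: "nat set \<Rightarrow> ('m, 'd) monoid_scheme \<Rightarrow> bool" where
  "pi_spectral \<pi> M \<longleftrightarrow> (\<forall>p::nat. Factorial_Ring.prime p \<and> has_prufer_section M p \<longrightarrow> p \<in> \<pi>)"

end

theory Submission
  imports Defs
begin

text \<open>
  Take for \<open>N\<close> the coinduced module \<open>Hom\<^bsub>\<int>G\<^sub>0\<^esub>(\<int>G, M)\<close>. Evaluation at the coset representatives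
  gives a filtration of \<open>N\<close> of length \<open>[G : G\<^sub>0]\<close> whose factors embed in \<open>M\<close>; hence \<open>N\<close> is
  torsion-free of finite rank, and a Pruefer section of \<open>N\<close> yields one of \<open>M\<close>, because a Pruefer
  section of an extension always yields one of the subgroup or of the quotient (a proper subgroup
  of \<open>\<int>\<^sub>p\<^sub>\<infinity>\<close> has bounded exponent). The epimorphism \<open>M \<rightarrow> A\<close> induces the \<open>G\<close>-equivariant transfer
  \<open>N \<rightarrow> A\<close>, \<open>\<phi> \<mapsto> \<Sum>\<^bsub>G\<^sub>0t\<^esub> t\<inverse> f(\<phi> t)\<close>, which is onto already on the functions supported on \<open>G\<^sub>0\<close>.
\<close>

section \<open>The Pruefer group\<close>

lemma carrier_prufer:
  "x \<in> carrier (prufer p) \<longleftrightarrow> 0 \<le> x \<and> x < 1 \<and> (\<exists>k. x * of_nat (p ^ k) \<in> \<int>)"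
  by (simp add: prufer_def)

lemma mult_prufer [simp]: "x \<otimes>\<^bsub>prufer p\<^esub> y = frac (x + y)"
  by (simp add: prufer_def)

lemma one_prufer [simp]: "\<one>\<^bsub>prufer p\<^esub> = 0"
  by (simp add: prufer_def)

lemma Ints_mult_power_mono:
  assumes "(x::rat) * of_nat (p ^ k) \<in> \<int>" "k \<le> m"
  shows "x * of_nat (p ^ m) \<in> \<int>"
proof -
  have "x * of_nat (p ^ m) = (x * of_nat (p ^ k)) * of_nat (p ^ (m - k))"
    using assms(2) by (simp flip: power_add)
  thus ?thesis using assms(1) by (metis Ints_mult Ints_of_nat)
qed

lemma frac_in_carrier_prufer:
  assumes "(z::rat) * of_nat (p ^ k) \<in> \<int>"
  shows "frac z \<in> carrier (prufer p)"
proof -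
  have "frac z * of_nat (p ^ k) = z * of_nat (p ^ k) - of_int \<lfloor>z\<rfloor> * of_nat (p ^ k)"
    by (simp add: frac_def algebra_simps)
  with assms have "frac z * of_nat (p ^ k) \<in> \<int>"
    by (metis Ints_diff Ints_mult Ints_of_int Ints_of_nat)
  thus ?thesis by (auto simp: carrier_prufer frac_lt_1)
qed

lemma comm_group_prufer: "comm_group (prufer p)"
proof (rule comm_groupI)
  fix x y assume "x \<in> carrier (prufer p)" "y \<in> carrier (prufer p)"
  then obtain k l where "x * of_nat (p ^ k) \<in> \<int>" "y * of_nat (p ^ l) \<in> \<int>"
    by (auto simp: carrier_prufer)
  hence "x * of_nat (p ^ (k + l)) \<in> \<int>" "y * of_nat (p ^ (k + l)) \<in> \<int>"
    using Ints_mult_power_mono by auto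
  hence "(x + y) * of_nat (p ^ (k + l)) \<in> \<int>" by (simp add: distrib_right)
  thus "x \<otimes>\<^bsub>prufer p\<^esub> y \<in> carrier (prufer p)" by (simp add: frac_in_carrier_prufer)
next
  fix x assume "x \<in> carrier (prufer p)"
  then obtain k where "x * of_nat (p ^ k) \<in> \<int>" by (auto simp: carrier_prufer)
  hence "(- x) * of_nat (p ^ k) \<in> \<int>" by (metis Ints_minus minus_mult_left)
  hence "frac (- x) \<in> carrier (prufer p)" by (rule frac_in_carrier_prufer)
  moreover have "frac (- x) \<otimes>\<^bsub>prufer p\<^esub> x = \<one>\<^bsub>prufer p\<^esub>" by simp
  ultimately show "\<exists>y\<in>carrier (prufer p). y \<otimes>\<^bsub>prufer p\<^esub> x = \<one>\<^bsub>prufer p\<^esub>" by blast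
next
  fix x y z :: rat
  show "x \<otimes>\<^bsub>prufer p\<^esub> y \<otimes>\<^bsub>prufer p\<^esub> z = x \<otimes>\<^bsub>prufer p\<^esub> (y \<otimes>\<^bsub>prufer p\<^esub> z)"
    by (simp add: add.assoc)
next
  fix x y :: rat
  show "x \<otimes>\<^bsub>prufer p\<^esub> y = y \<otimes>\<^bsub>prufer p\<^esub> x" by (simp add: add.commute)
qed (auto simp: carrier_prufer intro: exI[of _ 0])

lemma nat_pow_prufer:
  "x \<in> carrier (prufer p) \<Longrightarrow> x [^]\<^bsub>prufer p\<^esub> (n::nat) = frac (of_nat n * x)"
  by (induction n) (simp_all add: algebra_simps)

lemma (in comm_monoid) nat_pow_hom: "(\<lambda>x. x [^] (n::nat)) \<in> hom G G"
  by (rule homI) (simp_all add: nat_pow_distrib)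

lemma nat_pow_prufer_surj:
  assumes "p > 0"
  shows "(\<lambda>x. x [^]\<^bsub>prufer p\<^esub> (p ^ j)) ` carrier (prufer p) = carrier (prufer p)"
proof (intro equalityI subsetI)
  fix y assume "y \<in> (\<lambda>x. x [^]\<^bsub>prufer p\<^esub> (p ^ j)) ` carrier (prufer p)"
  thus "y \<in> carrier (prufer p)"
    using comm_group.axioms(2)[OF comm_group_prufer] by (auto intro: group.is_monoid monoid.nat_pow_closed)
next
  fix y assume y: "y \<in> carrier (prufer p)"
  then obtain k where k: "y * of_nat (p ^ k) \<in> \<int>" and y01: "0 \<le> y" "y < 1"
    by (auto simp: carrier_prufer)
  have pj: "(of_nat (p ^ j) :: rat) \<ge> 1" using assms by simp
  define x where "x = y / of_nat (p ^ j)"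
  have "x * of_nat (p ^ (k + j)) = y * of_nat (p ^ k)"
    using assms by (simp add: x_def power_add)
  moreover have "0 \<le> x" "x < 1" using y01 pj by (simp_all add: x_def divide_less_eq)
  ultimately have "x \<in> carrier (prufer p)" using k unfolding carrier_prufer by metis
  moreover have "frac (of_nat (p ^ j) * x) = y" using assms y01 by (simp add: x_def)
  ultimately show "y \<in> (\<lambda>x. x [^]\<^bsub>prufer p\<^esub> (p ^ j)) ` carrier (prufer p)"
    by (metis image_eqI nat_pow_prufer)
qed

lemma frac_multiple_eq:
  fixes a d P :: int
  assumes "coprime a P" "P > 0"
  obtains n :: nat where "frac (of_nat n * (of_int a / of_int P)) = frac (of_int d / of_int P :: rat)"
proof -
  obtain u v where uv: "u * a + v * P = 1"
    using bezout_int[of a P] assms(1) by (auto simp: coprime_iff_gcd_eq_1)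
  define n where "n = nat ((u * d) mod P)"
  define w where "w = - (d * v + (u * d) div P * a)"
  have na: "int n * a = d + P * w"
  proof -
    have "int n = (u * d) mod P" using assms(2) by (simp add: n_def)
    also have "\<dots> = u * d - P * ((u * d) div P)" by (metis minus_div_mult_eq_mod mult.commute)
    finally have n: "int n = u * d - P * ((u * d) div P)" .
    have "int n * a = d * (u * a) - P * ((u * d) div P) * a"
      unfolding n by (simp add: algebra_simps)
    also have "u * a = 1 - v * P" using uv by simp
    finally show ?thesis by (simp add: w_def algebra_simps)
  qed
  have "of_nat n * (of_int a / of_int P) = (of_int (int n * a) / of_int P :: rat)" by simp
  also have "\<dots> = of_int (d + P * w) / of_int P" by (simp only: na)
  also have "\<dots> = of_int d / of_int P + of_int w" using assms(2) by (simp add: field_simps)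
  finally have "frac (of_nat n * (of_int a / of_int P)) = frac (of_int d / of_int P :: rat)"
    by (simp only: frac_add_of_int_right)
  thus thesis by (rule that)
qed

lemma prufer_exact_denominator:
  assumes p: "Factorial_Ring.prime (p::nat)" and b: "b \<in> carrier (prufer p)" and bk: "b * of_nat (p ^ k) \<notin> \<int>"
  obtains m a where "k < m" "b * of_nat (p ^ m) = of_int a" "coprime a (int p ^ m)"
proof -
  have ex: "\<exists>m. b * of_nat (p ^ m) \<in> \<int>" using b by (auto simp: carrier_prufer)
  define m where "m = (LEAST m. b * of_nat (p ^ m) \<in> \<int>)"
  have bm: "b * of_nat (p ^ m) \<in> \<int>" unfolding m_def using ex by (rule LeastI_ex)
  have km: "k < m"
    using Ints_mult_power_mono[OF bm, of k] bk by (cases "m \<le> k") auto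
  then obtain m' where m': "m = Suc m'" by (cases m) auto
  from bm obtain a where a: "b * of_nat (p ^ m) = of_int a" by (auto elim: Ints_cases)
  have "\<not> int p dvd a"
  proof
    assume "int p dvd a"
    then obtain a' where "a = int p * a'" by (auto elim: dvdE)
    with a m' p have "b * of_nat (p ^ m') = of_int a'"
      by (simp add: algebra_simps prime_gt_0_nat)
    hence "b * of_nat (p ^ m') \<in> \<int>" by simp
    with not_less_Least[of m' "\<lambda>m. b * of_nat (p ^ m) \<in> \<int>"] m' show False
      by (simp add: m_def)
  qed
  hence "coprime a (int p ^ m)"
    using p by (metis prime_nat_int_transfer prime_imp_power_coprime)
  with km a show thesis by (rule that)
qed

lemma prufer_multiple_hits:
  assumes p: "Factorial_Ring.prime (p::nat)"
    and b: "b \<in> carrier (prufer p)" and bk: "b * of_nat (p ^ k) \<notin> \<int>"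
    and y: "y \<in> carrier (prufer p)" and yk: "y * of_nat (p ^ k) \<in> \<int>"
  obtains n :: nat where "frac (of_nat n * b) = y"
proof -
  obtain m a where km: "k < m" and a: "b * of_nat (p ^ m) = of_int a"
    and cop: "coprime a (int p ^ m)"
    using prufer_exact_denominator[OF p b bk] .
  have "y * of_nat (p ^ m) \<in> \<int>" using Ints_mult_power_mono[OF yk] km by simp
  then obtain d where d: "y * of_nat (p ^ m) = of_int d" by (auto elim: Ints_cases)
  have P: "int p ^ m > 0" using p by (simp add: prime_gt_0_nat)
  have "b = of_int a / of_int (int p ^ m)" "y = of_int d / of_int (int p ^ m)"
    using a d P by (simp_all add: eq_divide_eq)
  moreover obtain n :: nat where
    "frac (of_nat n * (of_int a / of_int (int p ^ m))) = frac (of_int d / of_int (int p ^ m) :: rat)"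
    using frac_multiple_eq[OF cop P] .
  moreover have "frac y = y" using y by (simp add: carrier_prufer)
  ultimately show thesis using that by metis
qed

lemma proper_subgroup_prufer_bounded:
  assumes p: "Factorial_Ring.prime (p::nat)"
    and B: "subgroup B (prufer p)" and ne: "B \<noteq> carrier (prufer p)"
  obtains j where "\<forall>b\<in>B. b * of_nat (p ^ j) \<in> \<int>"
proof (rule ccontr)
  assume unbounded: "\<not> thesis"
  have "carrier (prufer p) \<subseteq> B"
  proof
    fix y assume y: "y \<in> carrier (prufer p)"
    then obtain k where yk: "y * of_nat (p ^ k) \<in> \<int>" by (auto simp: carrier_prufer)
    from unbounded that obtain b where b: "b \<in> B" "b * of_nat (p ^ k) \<notin> \<int>" by blast
    have bc: "b \<in> carrier (prufer p)" using subgroup.subset[OF B] b(1) by blast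
    obtain n :: nat where "frac (of_nat n * b) = y"
      using prufer_multiple_hits[OF p bc b(2) y yk] .
    moreover have "b [^]\<^bsub>prufer p\<^esub> n \<in> B"
      using group.subgroup_int_pow_closed[OF _ B b(1), of "int n"] comm_group_prufer
      by (simp add: int_pow_int comm_group.axioms(2))
    ultimately show "y \<in> B" using nat_pow_prufer[OF bc] by simp
  qed
  with subgroup.subset[OF B] ne show False by blast
qed

section \<open>Pruefer sections of extensions\<close>

lemma (in comm_group) subgroup_imp_comm_group:
  assumes "subgroup H G"
  shows "comm_group (G\<lparr>carrier := H\<rparr>)"
  by (rule group.group_comm_groupI[OF subgroup_imp_group[OF assms]])
    (use assms in \<open>auto intro: m_comm dest: subgroup.mem_carrier\<close>)

text \<open>A section \<open>H/K \<cong> \<int>\<^sub>p\<^sub>\<infinity>\<close> is the same as a subgroup \<open>H\<close> with an epimorphism onto \<open>\<int>\<^sub>p\<^sub>\<infinity>\<close>;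
  the set \<open>S\<close> bounds where \<open>H\<close> may lie.\<close>

definition has_prufer_section_in :: "('m, 'd) monoid_scheme \<Rightarrow> 'm set \<Rightarrow> nat \<Rightarrow> bool" where
  "has_prufer_section_in M S p \<longleftrightarrow>
     (\<exists>H q. subgroup H M \<and> H \<subseteq> S \<and> q \<in> hom (M\<lparr>carrier := H\<rparr>) (prufer p) \<and>
        q ` H = carrier (prufer p))"

lemma has_prufer_section_iff:
  assumes "comm_group M"
  shows "has_prufer_section M p \<longleftrightarrow> has_prufer_section_in M (carrier M) p"
proof
  interpret M: comm_group M by fact
  assume "has_prufer_section M p"
  then obtain H K \<phi> where H: "subgroup H M" and K: "subgroup K M" and KH: "K \<subseteq> H"
    and \<phi>: "\<phi> \<in> iso ((M\<lparr>carrier := H\<rparr>) Mod K) (prufer p)"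
    unfolding has_prufer_section_def is_iso_def by blast
  define MH where "MH = M\<lparr>carrier := H\<rparr>"
  interpret MH: comm_group MH
    unfolding MH_def using M.subgroup_imp_comm_group[OF H] .
  interpret K: normal K MH
    using MH.subgroup_imp_normal M.subgroup_incl[OF K H KH] by (simp add: MH_def)
  have "\<phi> \<circ> (\<lambda>x. K #>\<^bsub>MH\<^esub> x) \<in> hom MH (prufer p)"
    using hom_compose[OF K.r_coset_hom_Mod] \<phi> unfolding iso_def MH_def by blast
  moreover have "(\<phi> \<circ> (\<lambda>x. K #>\<^bsub>MH\<^esub> x)) ` H = \<phi> ` carrier (MH Mod K)"
    by (simp add: carrier_FactGroup image_comp MH_def)
  moreover have "\<phi> ` carrier (MH Mod K) = carrier (prufer p)"
    using \<phi> by (simp add: iso_def bij_betw_def MH_def)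
  ultimately show "has_prufer_section_in M (carrier M) p"
    unfolding has_prufer_section_in_def MH_def using H subgroup.subset[OF H] by blast
next
  interpret M: comm_group M by fact
  assume "has_prufer_section_in M (carrier M) p"
  then obtain H q where H: "subgroup H M" and q: "q \<in> hom (M\<lparr>carrier := H\<rparr>) (prufer p)"
    and onto: "q ` H = carrier (prufer p)" unfolding has_prufer_section_in_def by blast
  interpret q: group_hom "M\<lparr>carrier := H\<rparr>" "prufer p" q
    using M.subgroup_imp_group[OF H] comm_group.axioms(2)[OF comm_group_prufer] q
    by (simp add: group_hom_def group_hom_axioms_def)
  have "subgroup (kernel (M\<lparr>carrier := H\<rparr>) (prufer p) q) M"
    using M.incl_subgroup[OF H q.subgroup_kernel] .
  moreover have "kernel (M\<lparr>carrier := H\<rparr>) (prufer p) q \<subseteq> H" by (auto simp: kernel_def)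
  ultimately show "has_prufer_section M p"
    unfolding has_prufer_section_def using H q.FactGroup_iso onto by auto
qed

lemma not_has_prufer_section_in_trivial:
  assumes "Factorial_Ring.prime p"
  shows "\<not> has_prufer_section_in M {\<one>\<^bsub>M\<^esub>} p"
proof
  assume "has_prufer_section_in M {\<one>\<^bsub>M\<^esub>} p"
  then obtain H q where "H \<subseteq> {\<one>\<^bsub>M\<^esub>}" "q ` H = carrier (prufer p)"
    unfolding has_prufer_section_in_def by blast
  hence carrier: "carrier (prufer p) \<subseteq> {q \<one>\<^bsub>M\<^esub>}" by auto
  have p: "(of_nat p :: rat) > 1" using prime_gt_1_nat[OF assms] by simp
  have "0 \<in> carrier (prufer p)" by (simp add: carrier_prufer)
  moreover have "1 / of_nat p \<noteq> (0::rat)" using p by simp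
  moreover have "1 / of_nat p \<in> carrier (prufer p)"
    unfolding carrier_prufer using p by (intro conjI exI[where x=1]) auto
  ultimately show False using carrier by (metis singletonD subsetD)
qed

lemma hom_factors_through:
  assumes G: "group G" and H: "group H" and K: "group K"
    and h: "h \<in> hom G H" and q: "q \<in> hom G K"
    and ker: "\<And>x. x \<in> carrier G \<Longrightarrow> h x = \<one>\<^bsub>H\<^esub> \<Longrightarrow> q x = \<one>\<^bsub>K\<^esub>"
  obtains q' where "q' \<in> hom (H\<lparr>carrier := h ` carrier G\<rparr>) K"
    and "\<And>x. x \<in> carrier G \<Longrightarrow> q' (h x) = q x"
proof -
  interpret h: group_hom G H h using G H h by (simp add: group_hom_def group_hom_axioms_def)
  interpret q: group_hom G K q using G K q by (simp add: group_hom_def group_hom_axioms_def)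
  have well_defined: "q x = q x'" if "x \<in> carrier G" "x' \<in> carrier G" "h x = h x'" for x x'
  proof -
    have "h (x' \<otimes>\<^bsub>G\<^esub> inv\<^bsub>G\<^esub> x) = h x' \<otimes>\<^bsub>H\<^esub> inv\<^bsub>H\<^esub> h x"
      using that(1,2) by simp
    also have "\<dots> = \<one>\<^bsub>H\<^esub>" using that(1) by (simp flip: that(3))
    finally have q_diff: "q (x' \<otimes>\<^bsub>G\<^esub> inv\<^bsub>G\<^esub> x) = \<one>\<^bsub>K\<^esub>"
      using that by (intro ker) auto
    have "q x' = q ((x' \<otimes>\<^bsub>G\<^esub> inv\<^bsub>G\<^esub> x) \<otimes>\<^bsub>G\<^esub> x)"
      using that by (simp add: h.G.m_assoc)
    also have "\<dots> = q (x' \<otimes>\<^bsub>G\<^esub> inv\<^bsub>G\<^esub> x) \<otimes>\<^bsub>K\<^esub> q x"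
      using that by (intro q.hom_mult) auto
    also have "\<dots> = q x" using q_diff that by simp
    finally show ?thesis ..
  qed
  define q' where "q' y = q (SOME x. x \<in> carrier G \<and> h x = y)" for y
  have q'h: "q' (h x) = q x" if "x \<in> carrier G" for x
  proof -
    have "\<exists>x'. x' \<in> carrier G \<and> h x' = h x" using that by blast
    hence "(SOME x'. x' \<in> carrier G \<and> h x' = h x) \<in> carrier G \<and> h (SOME x'. x' \<in> carrier G \<and> h x' = h x) = h x"
      by (rule someI_ex)
    thus ?thesis unfolding q'_def using well_defined that by metis
  qed
  have "q' \<in> hom (H\<lparr>carrier := h ` carrier G\<rparr>) K"
  proof (rule homI)
    fix y assume "y \<in> carrier (H\<lparr>carrier := h ` carrier G\<rparr>)"
    thus "q' y \<in> carrier K" using q'h by auto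
  next
    fix y1 y2 assume "y1 \<in> carrier (H\<lparr>carrier := h ` carrier G\<rparr>)" "y2 \<in> carrier (H\<lparr>carrier := h ` carrier G\<rparr>)"
    then obtain x1 x2 where x: "x1 \<in> carrier G" "x2 \<in> carrier G" and y: "y1 = h x1" "y2 = h x2"
      by auto
    have "q' (y1 \<otimes>\<^bsub>H\<^esub> y2) = q' (h (x1 \<otimes>\<^bsub>G\<^esub> x2))" using x y by simp
    also have "\<dots> = q (x1 \<otimes>\<^bsub>G\<^esub> x2)" using x by (intro q'h) simp
    also have "\<dots> = q' y1 \<otimes>\<^bsub>K\<^esub> q' y2" using x y by (simp add: q'h)
    finally show "q' (y1 \<otimes>\<^bsub>H\<lparr>carrier := h ` carrier G\<rparr>\<^esub> y2) = q' y1 \<otimes>\<^bsub>K\<^esub> q' y2"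
      by simp
  qed
  with q'h that show thesis by blast
qed

lemma hom_restrict_carrier:
  "q \<in> hom (M\<lparr>carrier := H\<rparr>) N \<Longrightarrow> K \<subseteq> H \<Longrightarrow> q \<in> hom (M\<lparr>carrier := K\<rparr>) N"
  unfolding hom_def by auto

text \<open>Either \<open>q\<close> still maps the kernel part onto \<open>\<int>\<^sub>p\<^sub>\<infinity>\<close>, or the image of the kernel part is
  killed by some \<open>p\<^sup>j\<close>; then \<open>p\<^sup>j q\<close> is still onto and factors through \<open>h\<close>.\<close>

lemma has_prufer_section_in_extension:
  assumes M: "comm_group M" and Q: "comm_group Q" and S: "subgroup S M"
    and h: "h \<in> hom (M\<lparr>carrier := S\<rparr>) Q"
    and p: "Factorial_Ring.prime p"
    and sec: "has_prufer_section_in M S p"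
  shows "has_prufer_section_in Q (carrier Q) p \<or> has_prufer_section_in M {x\<in>S. h x = \<one>\<^bsub>Q\<^esub>} p"
proof -
  interpret M: comm_group M by fact
  interpret Q: comm_group Q by fact
  interpret P: comm_group "prufer p" by (rule comm_group_prufer)
  from sec obtain H q where H: "subgroup H M" and HS: "H \<subseteq> S"
    and q: "q \<in> hom (M\<lparr>carrier := H\<rparr>) (prufer p)" and onto: "q ` H = carrier (prufer p)"
    unfolding has_prufer_section_in_def by blast
  define MH where "MH = M\<lparr>carrier := H\<rparr>"
  have MH: "group MH" unfolding MH_def using M.subgroup_imp_group[OF H] .
  interpret q: group_hom MH "prufer p" q
    using MH q by (simp add: group_hom_def group_hom_axioms_def MH_def)
  have hH: "h \<in> hom MH Q" unfolding MH_def using hom_restrict_carrier[OF h HS] .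
  interpret h: group_hom MH Q h
    using MH hH by (simp add: group_hom_def group_hom_axioms_def)
  define K where "K = kernel MH Q h"
  have K_MH: "subgroup K MH" unfolding K_def by (rule h.subgroup_kernel)
  have K: "subgroup K M" using M.incl_subgroup[OF H] K_MH by (simp add: MH_def)
  have K_ker: "K \<subseteq> {x\<in>S. h x = \<one>\<^bsub>Q\<^esub>}" using HS by (auto simp: K_def kernel_def MH_def)
  show ?thesis
  proof (cases "q ` K = carrier (prufer p)")
    case True
    moreover have "q \<in> hom (M\<lparr>carrier := K\<rparr>) (prufer p)"
      using hom_restrict_carrier[OF q] K_ker subgroup.subset[OF K_MH] by (simp add: MH_def)
    ultimately have "has_prufer_section_in M {x\<in>S. h x = \<one>\<^bsub>Q\<^esub>} p"
      unfolding has_prufer_section_in_def using K K_ker by blast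
    thus ?thesis ..
  next
    case False
    obtain j where j: "\<forall>b\<in>q ` K. b * of_nat (p ^ j) \<in> \<int>"
      using proper_subgroup_prufer_bounded[OF p q.subgroup_img_is_subgroup[OF K_MH] False] .
    define q2 where "q2 = (\<lambda>x. q x [^]\<^bsub>prufer p\<^esub> (p ^ j))"
    have q2: "q2 \<in> hom MH (prufer p)"
      using hom_compose[OF q P.nat_pow_hom] by (simp add: q2_def comp_def MH_def)
    have "q2 ` H = (\<lambda>x. x [^]\<^bsub>prufer p\<^esub> (p ^ j)) ` carrier (prufer p)"
      by (simp add: q2_def image_comp flip: onto)
    hence q2_onto: "q2 ` H = carrier (prufer p)"
      using nat_pow_prufer_surj p prime_gt_0_nat by auto
    have "q2 x = \<one>\<^bsub>prufer p\<^esub>" if "x \<in> carrier MH" "h x = \<one>\<^bsub>Q\<^esub>" for x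
    proof -
      have "q x * of_nat (p ^ j) \<in> \<int>" using j that by (auto simp: K_def kernel_def)
      thus ?thesis using that by (simp add: q2_def nat_pow_prufer mult.commute)
    qed
    then obtain q' where q': "q' \<in> hom (Q\<lparr>carrier := h ` H\<rparr>) (prufer p)"
      and q'h: "\<And>x. x \<in> H \<Longrightarrow> q' (h x) = q2 x"
      using hom_factors_through[OF MH Q.is_group P.is_group hH q2] by (auto simp: MH_def)
    have "subgroup (h ` H) Q"
      using h.subgroup_img_is_subgroup[OF group.subgroup_self[OF MH]] by (simp add: MH_def)
    moreover have "q' ` (h ` H) = carrier (prufer p)"
      using q'h q2_onto by (simp add: image_comp)
    ultimately have "has_prufer_section_in Q (carrier Q) p"
      unfolding has_prufer_section_in_def using q' subgroup.subset by blast
    thus ?thesis ..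
  qed
qed

section \<open>Torsion-free rank of extensions\<close>

context comm_group
begin

lemma finprod_int_pow:
  assumes "f \<in> I \<rightarrow> carrier G"
  shows "(\<Otimes>i\<in>I. f i) [^] (k::int) = (\<Otimes>i\<in>I. f i [^] k)"
  using assms
proof (induction I rule: infinite_finite_induct)
  case (insert a A)
  hence "(\<Otimes>i\<in>insert a A. f i) [^] k = f a [^] k \<otimes> (\<Otimes>i\<in>A. f i) [^] k"
    by (simp add: int_pow_distrib)
  also have "\<dots> = (\<Otimes>i\<in>insert a A. f i [^] k)" using insert by (simp add: Pi_def)
  finally show ?case .
qed simp_all

lemma int_pow_sum:
  assumes "x \<in> carrier G"
  shows "x [^] (\<Sum>i\<in>I. e i :: int) = (\<Otimes>i\<in>I. x [^] e i)"
  by (induction I rule: infinite_finite_induct) (simp_all add: assms int_pow_mult Pi_def)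

lemma finprod_swap:
  assumes "finite A" "finite B" "\<And>a b. a \<in> A \<Longrightarrow> b \<in> B \<Longrightarrow> f a b \<in> carrier G"
  shows "(\<Otimes>a\<in>A. \<Otimes>b\<in>B. f a b) = (\<Otimes>b\<in>B. \<Otimes>a\<in>A. f a b)"
  using assms
proof (induction A rule: finite_induct)
  case (insert a A)
  have "(\<Otimes>a'\<in>insert a A. \<Otimes>b\<in>B. f a' b) = (\<Otimes>b\<in>B. f a b) \<otimes> (\<Otimes>b\<in>B. \<Otimes>a'\<in>A. f a' b)"
    using insert by (simp add: Pi_def)
  also have "\<dots> = (\<Otimes>b\<in>B. f a b \<otimes> (\<Otimes>a'\<in>A. f a' b))"
    using insert.prems by (simp add: finprod_multf Pi_def)
  also have "\<dots> = (\<Otimes>b\<in>B. \<Otimes>a'\<in>insert a A. f a' b)"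
    using insert by (intro finprod_cong) (auto simp: Pi_def)
  finally show ?case .
qed simp

lemma finprod_consistent:
  assumes H: "subgroup H G" and f: "f \<in> I \<rightarrow> H"
  shows "finprod (G\<lparr>carrier := H\<rparr>) f I = finprod G f I"
proof -
  interpret H: comm_group "G\<lparr>carrier := H\<rparr>" using subgroup_imp_comm_group[OF H] .
  show ?thesis using f
  proof (induction I rule: infinite_finite_induct)
    case (insert a A)
    hence "f a \<in> H" "f \<in> A \<rightarrow> H" by auto
    moreover from this have "f a \<in> carrier G" "f \<in> A \<rightarrow> carrier G" using subgroup.subset[OF H] by auto
    ultimately show ?case using insert H.finprod_insert[of A a f] by simp
  qed simp_all
qed

end

lemma hom_finprod:
  assumes G: "comm_group G" and H: "comm_group H" and h: "h \<in> hom G H"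
    and f: "f \<in> I \<rightarrow> carrier G"
  shows "h (finprod G f I) = finprod H (h \<circ> f) I"
proof -
  interpret G: comm_group G by fact
  interpret H: comm_group H by fact
  interpret h: group_hom G H h using G.is_group H.is_group h by (simp add: group_hom_def group_hom_axioms_def)
  show ?thesis using f
    by (induction I rule: infinite_finite_induct) (auto simp: Pi_def)
qed

definition rank_bounded_in :: "('m, 'd) monoid_scheme \<Rightarrow> 'm set \<Rightarrow> nat \<Rightarrow> bool" where
  "rank_bounded_in M S r \<longleftrightarrow> (\<forall>T. T \<subseteq> S \<and> Z_independent M T \<longrightarrow> finite T \<and> card T \<le> r)"

definition Z_independent_family :: "('m, 'd) monoid_scheme \<Rightarrow> 'i set \<Rightarrow> ('i \<Rightarrow> 'm) \<Rightarrow> bool" where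
  "Z_independent_family M I v \<longleftrightarrow>
     (\<forall>c::'i \<Rightarrow> int. finprod M (\<lambda>i. v i [^]\<^bsub>M\<^esub> c i) I = \<one>\<^bsub>M\<^esub> \<longrightarrow> (\<forall>i\<in>I. c i = 0))"

lemma Z_independentD:
  fixes c :: "'m \<Rightarrow> int"
  assumes "Z_independent M S" "finite T" "T \<subseteq> S" "finprod M (\<lambda>x. x [^]\<^bsub>M\<^esub> c x) T = \<one>\<^bsub>M\<^esub>"
    and "x \<in> T"
  shows "c x = 0"
  using assms(1)[unfolded Z_independent_def, THEN conjunct2, rule_format, of T c] assms(2-5) by simp

lemma Z_independent_familyD:
  fixes c :: "'i \<Rightarrow> int"
  assumes "Z_independent_family M I v" "finprod M (\<lambda>i. v i [^]\<^bsub>M\<^esub> c i) I = \<one>\<^bsub>M\<^esub>" "i \<in> I"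
  shows "c i = 0"
  using assms(1)[unfolded Z_independent_family_def, rule_format, OF assms(2,3)] .

lemma Z_independent_subset: "Z_independent M T \<Longrightarrow> T' \<subseteq> T \<Longrightarrow> Z_independent M T'"
  unfolding Z_independent_def by (meson order_trans)

lemma rank_bounded_inI:
  assumes "\<And>T. finite T \<Longrightarrow> T \<subseteq> S \<Longrightarrow> Z_independent M T \<Longrightarrow> card T \<le> r"
  shows "rank_bounded_in M S r"
  unfolding rank_bounded_in_def
proof (intro allI impI conjI)
  fix T assume T: "T \<subseteq> S \<and> Z_independent M T"
  show "finite T"
  proof (rule ccontr)
    assume "infinite T"
    then obtain T' where "finite T'" "card T' = Suc r" "T' \<subseteq> T"
      using infinite_arbitrarily_large by blast
    with assms[of T'] T Z_independent_subset show False by force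
  qed
  with assms T show "card T \<le> r" by blast
qed

context comm_group
begin

lemma Z_independent_family_inj_on:
  assumes I: "finite I" and v: "v \<in> I \<rightarrow> carrier G" and ind: "Z_independent_family G I v"
  shows "inj_on v I"
proof (rule inj_onI, rule ccontr)
  fix i j assume ij: "i \<in> I" "j \<in> I" "v i = v j" "i \<noteq> j"
  define c :: "_ \<Rightarrow> int" where "c = (\<lambda>k. if k = i then 1 else if k = j then -1 else 0)"
  have vi: "v i \<in> carrier G" using v ij by auto
  have "(\<Otimes>k\<in>I. v k [^] c k) = (\<Otimes>k\<in>{i, j}. v k [^] c k)"
    by (rule finprod_mono_neutral_cong_right) (use I ij v in \<open>auto simp: c_def Pi_def\<close>)
  also have "\<dots> = v i [^] c i \<otimes> (\<Otimes>k\<in>{j}. v k [^] c k)"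
    using ij vi v by (subst finprod_insert) (auto simp: Pi_def)
  also have "\<dots> = v i \<otimes> inv (v i)"
    using ij vi by (simp add: c_def int_pow_neg)
  also have "\<dots> = \<one>" using vi by simp
  finally have "c i = 0" by (rule Z_independent_familyD[OF ind _ ij(1)])
  thus False by (simp add: c_def)
qed

lemma Z_independent_image:
  assumes I: "finite I" and v: "v \<in> I \<rightarrow> carrier G" and ind: "Z_independent_family G I v"
  shows "Z_independent G (v ` I)"
  unfolding Z_independent_def
proof (intro conjI allI impI)
  show "v ` I \<subseteq> carrier G" using v by auto
next
  fix T and c :: "_ \<Rightarrow> int"
  assume a: "finite T \<and> T \<subseteq> v ` I \<and> (\<Otimes>x\<in>T. x [^] c x) = \<one>"
  define I' where "I' = {k\<in>I. v k \<in> T}"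
  have TI': "T = v ` I'" using a by (auto simp: I'_def)
  have injI': "inj_on v I'"
    using Z_independent_family_inj_on[OF I v ind] by (rule inj_on_subset) (auto simp: I'_def)
  define c' where "c' = (\<lambda>k. if k \<in> I' then c (v k) else 0)"
  have "(\<Otimes>k\<in>I. v k [^] c' k) = (\<Otimes>k\<in>I'. v k [^] c (v k))"
    by (rule finprod_mono_neutral_cong_right) (use I v in \<open>auto simp: c'_def I'_def Pi_def\<close>)
  also have "\<dots> = (\<Otimes>x\<in>v ` I'. x [^] c x)"
    by (rule finprod_reindex[symmetric]) (use v injI' in \<open>auto simp: I'_def Pi_def\<close>)
  also have "\<dots> = \<one>" using a TI' by simp
  finally have z: "c' k = 0" if "k \<in> I" for k
    using Z_independent_familyD[OF ind _ that] by blast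
  show "\<forall>x\<in>T. c x = 0"
  proof
    fix x assume "x \<in> T"
    then obtain k where "k \<in> I'" "x = v k" using TI' by blast
    thus "c x = 0" using z[of k] by (simp add: c'_def I'_def)
  qed
qed

lemma rank_bounded_in_family_card:
  assumes r: "rank_bounded_in G S r" and S: "S \<subseteq> carrier G"
    and I: "finite I" and v: "v \<in> I \<rightarrow> S" and ind: "Z_independent_family G I v"
  shows "card I \<le> r"
proof -
  have vc: "v \<in> I \<rightarrow> carrier G" using v S by auto
  have "card (v ` I) \<le> r"
    using r Z_independent_image[OF I vc ind] v unfolding rank_bounded_in_def by blast
  thus ?thesis using card_image[OF Z_independent_family_inj_on[OF I vc ind]] by simp
qed

lemma maximal_Z_independent_subfamily:
  assumes I: "finite I" and v: "v \<in> I \<rightarrow> carrier G"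
  obtains J where "J \<subseteq> I" "Z_independent_family G J v"
    and "\<And>s. s \<in> I - J \<Longrightarrow> \<exists>C :: _ \<Rightarrow> int. (\<Otimes>i\<in>insert s J. v i [^] C i) = \<one> \<and> C s \<noteq> 0"
proof -
  define F where "F = {J. J \<subseteq> I \<and> Z_independent_family G J v}"
  have "F \<subseteq> Pow I" by (auto simp: F_def)
  with I have F: "finite F" by (meson finite_Pow_iff finite_subset)
  have "{} \<in> F" by (simp add: F_def Z_independent_family_def)
  hence "Max (card ` F) \<in> card ` F" using F by (intro Max_in) auto
  then obtain J where Jm: "Max (card ` F) = card J" and JF: "J \<in> F" by (rule imageE)
  have Jmax: "card J' \<le> card J" if "J' \<in> F" for J'
    unfolding Jm[symmetric] using F that by (intro Max_ge) auto
  from JF have JI: "J \<subseteq> I" and Jind: "Z_independent_family G J v" by (auto simp: F_def)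
  have "\<exists>C :: _ \<Rightarrow> int. (\<Otimes>i\<in>insert s J. v i [^] C i) = \<one> \<and> C s \<noteq> 0" if s: "s \<in> I - J" for s
  proof -
    have "card (insert s J) > card J" using s JI I by (simp add: finite_subset)
    hence "insert s J \<notin> F" using Jmax by (meson not_le)
    hence "\<not> Z_independent_family G (insert s J) v" using s JI by (simp add: F_def)
    hence "\<exists>C :: _ \<Rightarrow> int. (\<Otimes>i\<in>insert s J. v i [^] C i) = \<one> \<and> (\<exists>i\<in>insert s J. C i \<noteq> 0)"
      unfolding Z_independent_family_def by simp
    then obtain C :: "_ \<Rightarrow> int" where C: "(\<Otimes>i\<in>insert s J. v i [^] C i) = \<one>"
      and nz: "\<exists>i\<in>insert s J. C i \<noteq> 0" by blast
    have "C s \<noteq> 0"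
    proof
      assume "C s = 0"
      moreover have "(\<Otimes>i\<in>insert s J. v i [^] C i) = v s [^] C s \<otimes> (\<Otimes>i\<in>J. v i [^] C i)"
        using s JI I v by (intro finprod_insert) (auto simp: finite_subset)
      moreover have "(\<lambda>i. v i [^] C i) \<in> J \<rightarrow> carrier G" using JI v by auto
      ultimately have "(\<Otimes>i\<in>J. v i [^] C i) = \<one>" using C by simp
      hence "\<forall>i\<in>J. C i = 0" using Z_independent_familyD[OF Jind, of C] by blast
      with nz \<open>C s = 0\<close> show False by blast
    qed
    with C show ?thesis by (intro exI[of _ C]) simp
  qed
  with JI Jind show thesis by (rule that)
qed

lemma Z_independent_family_combinations:
  assumes T: "finite T" and ind: "Z_independent G T" and IT: "I \<subseteq> T"
    and diag: "\<And>s t. s \<in> I \<Longrightarrow> t \<in> I \<Longrightarrow> c s t \<noteq> 0 \<longleftrightarrow> s = t"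
  shows "Z_independent_family G I (\<lambda>s. \<Otimes>t\<in>T. t [^] (c s t :: int))"
  unfolding Z_independent_family_def
proof (intro allI impI ballI)
  fix d :: "_ \<Rightarrow> int" and t
  assume prod: "(\<Otimes>s\<in>I. (\<Otimes>t\<in>T. t [^] c s t) [^] d s) = \<one>" and t: "t \<in> I"
  have Tc: "T \<subseteq> carrier G" using ind unfolding Z_independent_def by blast
  have I: "finite I" using finite_subset[OF IT T] .
  have "(\<Otimes>t\<in>T. t [^] c s t) [^] d s = (\<Otimes>t\<in>T. t [^] (c s t * d s))" for s
    using subsetD[OF Tc] by (simp add: finprod_int_pow Pi_def int_pow_pow cong: finprod_cong)
  hence "(\<Otimes>s\<in>I. (\<Otimes>t\<in>T. t [^] c s t) [^] d s) = (\<Otimes>s\<in>I. \<Otimes>t\<in>T. t [^] (c s t * d s))"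
    by simp
  also have "\<dots> = (\<Otimes>t\<in>T. \<Otimes>s\<in>I. t [^] (c s t * d s))"
    using Tc T I by (intro finprod_swap) auto
  also have "\<dots> = (\<Otimes>t\<in>T. t [^] (\<Sum>s\<in>I. c s t * d s))"
    using subsetD[OF Tc] by (intro finprod_cong) (auto simp: int_pow_sum Pi_def)
  finally have "(\<Sum>s\<in>I. c s t * d s) = 0"
    using Z_independentD[OF ind T subset_refl, of "\<lambda>t. \<Sum>s\<in>I. c s t * d s" t] prod t IT by auto
  moreover have "(\<Sum>s\<in>I. c s t * d s) = c t t * d t + (\<Sum>s\<in>I - {t}. c s t * d s)"
    using I t by (rule sum.remove)
  moreover have "(\<Sum>s\<in>I - {t}. c s t * d s) = 0"
    using diag t by (intro sum.neutral) auto
  ultimately show "d t = 0" using diag[OF t t] by simp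
qed

end

lemma rank_bounded_in_trivial:
  assumes "comm_group M"
  shows "rank_bounded_in M {\<one>\<^bsub>M\<^esub>} 0"
proof (rule rank_bounded_inI)
  interpret comm_group M by fact
  fix T assume T: "T \<subseteq> {\<one>\<^bsub>M\<^esub>}" "Z_independent M T"
  have "\<one>\<^bsub>M\<^esub> \<notin> T"
  proof
    assume one: "\<one>\<^bsub>M\<^esub> \<in> T"
    hence "T = {\<one>\<^bsub>M\<^esub>}" using T by blast
    moreover have "(\<Otimes>\<^bsub>M\<^esub>x\<in>{\<one>\<^bsub>M\<^esub>}. x [^]\<^bsub>M\<^esub> (1::int)) = \<one>\<^bsub>M\<^esub>" by simp
    ultimately show False using Z_independentD[OF T(2), of T "\<lambda>_. 1"] one by simp
  qed
  with T have "T = {}" by blast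
  thus "card T \<le> 0" by simp
qed

lemma hom_finprod_int_pow:
  assumes M: "comm_group M" and Q: "comm_group Q" and S: "subgroup S M"
    and h: "h \<in> hom (M\<lparr>carrier := S\<rparr>) Q" and TS: "T \<subseteq> S"
  shows "(\<Otimes>\<^bsub>M\<^esub>t\<in>T. t [^]\<^bsub>M\<^esub> (e t :: int)) \<in> S"
    and "h (\<Otimes>\<^bsub>M\<^esub>t\<in>T. t [^]\<^bsub>M\<^esub> e t) = (\<Otimes>\<^bsub>Q\<^esub>t\<in>T. h t [^]\<^bsub>Q\<^esub> e t)"
proof -
  interpret M: comm_group M by fact
  interpret Q: comm_group Q by fact
  define MS where "MS = M\<lparr>carrier := S\<rparr>"
  interpret MS: comm_group MS unfolding MS_def by (rule M.subgroup_imp_comm_group[OF S])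
  interpret h: group_hom MS Q h
    using MS.is_group Q.is_group h by (simp add: group_hom_def group_hom_axioms_def MS_def)
  have pows: "(\<lambda>t. t [^]\<^bsub>M\<^esub> e t) \<in> T \<rightarrow> carrier MS"
    using M.subgroup_int_pow_closed[OF S] TS by (auto simp: MS_def)
  have consistent: "(\<Otimes>\<^bsub>M\<^esub>t\<in>T. t [^]\<^bsub>M\<^esub> e t) = (\<Otimes>\<^bsub>MS\<^esub>t\<in>T. t [^]\<^bsub>M\<^esub> e t)"
    using M.finprod_consistent[OF S, of "\<lambda>t. t [^]\<^bsub>M\<^esub> e t" T] pows by (simp add: MS_def)
  show "(\<Otimes>\<^bsub>M\<^esub>t\<in>T. t [^]\<^bsub>M\<^esub> e t) \<in> S"
    using MS.finprod_closed[OF pows] by (simp add: consistent MS_def)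
  have "h (\<Otimes>\<^bsub>M\<^esub>t\<in>T. t [^]\<^bsub>M\<^esub> e t) = (\<Otimes>\<^bsub>Q\<^esub>t\<in>T. h (t [^]\<^bsub>M\<^esub> e t))"
    unfolding consistent using hom_finprod[OF MS.comm_group_axioms Q _ pows] h
    by (simp add: MS_def comp_def)
  also have "\<dots> = (\<Otimes>\<^bsub>Q\<^esub>t\<in>T. h t [^]\<^bsub>Q\<^esub> e t)"
  proof (rule Q.finprod_cong')
    fix t assume "t \<in> T"
    hence "t \<in> S" using TS by blast
    thus "h (t [^]\<^bsub>M\<^esub> e t) = h t [^]\<^bsub>Q\<^esub> e t"
      using h.hom_int_pow[of t "e t"] M.int_pow_consistent[OF S, of t "e t"] by (simp add: MS_def)
  qed (use TS in \<open>auto simp: MS_def\<close>)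
  finally show "h (\<Otimes>\<^bsub>M\<^esub>t\<in>T. t [^]\<^bsub>M\<^esub> e t) = (\<Otimes>\<^bsub>Q\<^esub>t\<in>T. h t [^]\<^bsub>Q\<^esub> e t)" .
qed

text \<open>Take a maximal part \<open>J\<close> of an independent set \<open>T\<close> whose image under \<open>h\<close> is independent; each
  \<open>s \<in> T - J\<close> then yields a kernel element, and these kernel elements are independent.\<close>

lemma rank_bounded_in_extension:
  assumes M: "comm_group M" and Q: "comm_group Q" and S: "subgroup S M"
    and h: "h \<in> hom (M\<lparr>carrier := S\<rparr>) Q"
    and rQ: "rank_bounded_in Q (carrier Q) a" and rK: "rank_bounded_in M {x\<in>S. h x = \<one>\<^bsub>Q\<^esub>} b"
  shows "rank_bounded_in M S (a + b)"
proof (rule rank_bounded_inI)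
  interpret M: comm_group M by fact
  interpret Q: comm_group Q by fact
  fix T assume T: "finite T" and TS: "T \<subseteq> S" and ind: "Z_independent M T"
  have hT: "h \<in> T \<rightarrow> carrier Q" using TS hom_in_carrier[OF h] by auto
  obtain J where JT: "J \<subseteq> T" and Jind: "Z_independent_family Q J h"
    and dep: "\<And>s. s \<in> T - J \<Longrightarrow> \<exists>C :: _ \<Rightarrow> int. (\<Otimes>\<^bsub>Q\<^esub>i\<in>insert s J. h i [^]\<^bsub>Q\<^esub> C i) = \<one>\<^bsub>Q\<^esub> \<and> C s \<noteq> 0"
    using Q.maximal_Z_independent_subfamily[OF T hT] by blast
  have "card J \<le> a"
    using Q.rank_bounded_in_family_card[OF rQ subset_refl finite_subset[OF JT T] _ Jind] hT JT by auto
  have "\<forall>s\<in>T - J. \<exists>C :: _ \<Rightarrow> int. (\<Otimes>\<^bsub>Q\<^esub>i\<in>insert s J. h i [^]\<^bsub>Q\<^esub> C i) = \<one>\<^bsub>Q\<^esub> \<and> C s \<noteq> 0"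
    using dep by blast
  then obtain C :: "_ \<Rightarrow> _ \<Rightarrow> int" where C: "\<And>s. s \<in> T - J \<Longrightarrow>
      (\<Otimes>\<^bsub>Q\<^esub>i\<in>insert s J. h i [^]\<^bsub>Q\<^esub> C s i) = \<one>\<^bsub>Q\<^esub> \<and> C s s \<noteq> 0"
    by (metis bchoice)
  have C_nz: "C s s \<noteq> 0" if "s \<in> T - J" for s using C[OF that] ..
  define c where "c s t = (if t \<in> insert s J then C s t else 0)" for s t
  define u where "u s = (\<Otimes>\<^bsub>M\<^esub>t\<in>T. t [^]\<^bsub>M\<^esub> c s t)" for s
  have "u s \<in> {x\<in>S. h x = \<one>\<^bsub>Q\<^esub>}" if s: "s \<in> T - J" for s
  proof (intro CollectI conjI)
    show "u s \<in> S" unfolding u_def by (rule hom_finprod_int_pow(1)[OF M Q S h TS])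
    have "h (u s) = (\<Otimes>\<^bsub>Q\<^esub>t\<in>T. h t [^]\<^bsub>Q\<^esub> c s t)"
      unfolding u_def by (rule hom_finprod_int_pow(2)[OF M Q S h TS])
    also have "\<dots> = (\<Otimes>\<^bsub>Q\<^esub>i\<in>insert s J. h i [^]\<^bsub>Q\<^esub> C s i)"
      using s JT T hT by (intro Q.finprod_mono_neutral_cong_right) (auto simp: c_def)
    also have "\<dots> = \<one>\<^bsub>Q\<^esub>" using C[OF s] ..
    finally show "h (u s) = \<one>\<^bsub>Q\<^esub>" .
  qed
  moreover have "Z_independent_family M (T - J) u"
    unfolding u_def using T ind
    by (intro M.Z_independent_family_combinations) (auto simp: c_def C_nz)
  ultimately have "card (T - J) \<le> b"
    by (intro M.rank_bounded_in_family_card[OF rK _ finite_Diff[OF T]]) (use subgroup.subset[OF S] in auto)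
  with \<open>card J \<le> a\<close> show "card T \<le> a + b"
    using card_Diff_subset[OF finite_subset[OF JT T] JT] card_mono[OF T JT] by linarith
qed

section \<open>The coinduced module\<close>

lemma G_module_act_hom:
  assumes "G_module G M act" "g \<in> carrier G"
  shows "act g \<in> hom M M"
  using assms unfolding G_module_def by (auto intro: homI)

lemma G_module_group_hom:
  assumes "G_module G M act" "g \<in> carrier G"
  shows "group_hom M M (act g)"
  using assms G_module_act_hom[OF assms] unfolding G_module_def
  by (simp add: group_hom_def group_hom_axioms_def comm_group.axioms(2))

text \<open>The coinduced module \<open>Hom\<^bsub>\<int>G\<^sub>0\<^esub>(\<int>G, M)\<close>: functions on \<open>G\<close> (trivial outside \<open>G\<close>) that are
  \<open>G\<^sub>0\<close>-equivariant from the left, with \<open>G\<close> acting by right translation.\<close>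

definition coinduced :: "('g, 'c) monoid_scheme \<Rightarrow> 'g set \<Rightarrow> ('m, 'd) monoid_scheme \<Rightarrow> ('g \<Rightarrow> 'm \<Rightarrow> 'm)
    \<Rightarrow> ('g \<Rightarrow> 'm) monoid" where
  "coinduced G G0 M actM =
     \<lparr> carrier = {\<phi>. (\<forall>x. \<phi> x \<in> carrier M) \<and> (\<forall>x. x \<notin> carrier G \<longrightarrow> \<phi> x = \<one>\<^bsub>M\<^esub>)
                   \<and> (\<forall>h\<in>G0. \<forall>x\<in>carrier G. \<phi> (h \<otimes>\<^bsub>G\<^esub> x) = actM h (\<phi> x))},
       monoid.mult = (\<lambda>\<phi> \<psi> x. \<phi> x \<otimes>\<^bsub>M\<^esub> \<psi> x),
       one = (\<lambda>x. \<one>\<^bsub>M\<^esub>) \<rparr>"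

definition coinduced_act :: "('g, 'c) monoid_scheme \<Rightarrow> ('m, 'd) monoid_scheme \<Rightarrow> 'g \<Rightarrow> ('g \<Rightarrow> 'm) \<Rightarrow> 'g \<Rightarrow> 'm" where
  "coinduced_act G M g \<phi> = (\<lambda>x. if x \<in> carrier G then \<phi> (x \<otimes>\<^bsub>G\<^esub> g) else \<one>\<^bsub>M\<^esub>)"

locale coinduced_module =
  fixes G :: "'g monoid" and G0 :: "'g set" and M :: "'m monoid" and actM :: "'g \<Rightarrow> 'm \<Rightarrow> 'm"
  assumes group_G: "group G" and subgroup_G0: "subgroup G0 G"
    and module_M: "G_module (G\<lparr>carrier := G0\<rparr>) M actM"
begin

abbreviation "N \<equiv> coinduced G G0 M actM"

lemma comm_group_M: "comm_group M"
  using module_M unfolding G_module_def by blast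

lemma actM_closed: "h \<in> G0 \<Longrightarrow> x \<in> carrier M \<Longrightarrow> actM h x \<in> carrier M"
  using module_M unfolding G_module_def by simp

lemma actM_group_hom: "h \<in> G0 \<Longrightarrow> group_hom M M (actM h)"
  using G_module_group_hom[OF module_M] by simp

lemma actM_comp: "h \<in> G0 \<Longrightarrow> h' \<in> G0 \<Longrightarrow> x \<in> carrier M \<Longrightarrow> actM (h \<otimes>\<^bsub>G\<^esub> h') x = actM h (actM h' x)"
  using module_M unfolding G_module_def by simp

lemma actM_id: "x \<in> carrier M \<Longrightarrow> actM \<one>\<^bsub>G\<^esub> x = x"
  using module_M unfolding G_module_def by simp

lemma carrier_coinduced:
  "\<phi> \<in> carrier N \<longleftrightarrow> (\<forall>x. \<phi> x \<in> carrier M) \<and> (\<forall>x. x \<notin> carrier G \<longrightarrow> \<phi> x = \<one>\<^bsub>M\<^esub>)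
     \<and> (\<forall>h\<in>G0. \<forall>x\<in>carrier G. \<phi> (h \<otimes>\<^bsub>G\<^esub> x) = actM h (\<phi> x))"
  by (simp add: coinduced_def)

lemma mult_coinduced [simp]: "\<phi> \<otimes>\<^bsub>N\<^esub> \<psi> = (\<lambda>x. \<phi> x \<otimes>\<^bsub>M\<^esub> \<psi> x)"
  by (simp add: coinduced_def)

lemma one_coinduced [simp]: "\<one>\<^bsub>N\<^esub> = (\<lambda>x. \<one>\<^bsub>M\<^esub>)"
  by (simp add: coinduced_def)

lemma coinduced_inv_closed:
  assumes "\<phi> \<in> carrier N"
  shows "(\<lambda>x. inv\<^bsub>M\<^esub> \<phi> x) \<in> carrier N"
proof -
  interpret M: comm_group M by (rule comm_group_M)
  show ?thesis using assms group_hom.hom_inv[OF actM_group_hom] unfolding carrier_coinduced by auto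
qed

lemma comm_group_coinduced: "comm_group N"
proof -
  interpret M: comm_group M by (rule comm_group_M)
  show ?thesis
  proof (rule comm_groupI)
    fix \<phi> assume \<phi>: "\<phi> \<in> carrier N"
    have "(\<lambda>x. inv\<^bsub>M\<^esub> \<phi> x) \<otimes>\<^bsub>N\<^esub> \<phi> = \<one>\<^bsub>N\<^esub>" using \<phi> by (simp add: carrier_coinduced)
    with coinduced_inv_closed[OF \<phi>] show "\<exists>\<psi>\<in>carrier N. \<psi> \<otimes>\<^bsub>N\<^esub> \<phi> = \<one>\<^bsub>N\<^esub>" by blast
  qed (auto simp: carrier_coinduced M.m_ac group_hom.hom_mult[OF actM_group_hom]
      group_hom.hom_one[OF actM_group_hom])
qed

lemma inv_coinduced:
  assumes "\<phi> \<in> carrier N"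
  shows "inv\<^bsub>N\<^esub> \<phi> = (\<lambda>x. inv\<^bsub>M\<^esub> \<phi> x)"
proof -
  interpret N: comm_group N by (rule comm_group_coinduced)
  interpret M: comm_group M by (rule comm_group_M)
  show ?thesis
    using assms coinduced_inv_closed[OF assms] by (intro N.inv_equality) (auto simp: carrier_coinduced)
qed

lemma nat_pow_coinduced: "(\<phi> [^]\<^bsub>N\<^esub> (n::nat)) x = \<phi> x [^]\<^bsub>M\<^esub> n"
  by (induction n) auto

lemma G_module_coinduced: "G_module G N (coinduced_act G M)"
proof -
  interpret G: group G by (rule group_G)
  interpret M: comm_group M by (rule comm_group_M)
  have G0: "G0 \<subseteq> carrier G" using subgroup.subset[OF subgroup_G0] .
  show ?thesis unfolding G_module_def
  proof (intro conjI ballI)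
    fix g \<phi> assume g: "g \<in> carrier G" and \<phi>: "\<phi> \<in> carrier N"
    show "coinduced_act G M g \<phi> \<in> carrier N"
      using \<phi> g G0 unfolding carrier_coinduced coinduced_act_def by (auto simp: G.m_assoc)
  qed (auto simp: group_G comm_group_coinduced coinduced_act_def carrier_coinduced G.m_assoc)
qed

end

lemma torsion_free_imp_finite_p_rank:
  assumes "torsion_free M" "Factorial_Ring.prime p"
  shows "finite_p_rank M p"
proof -
  have "{x \<in> carrier M. x [^]\<^bsub>M\<^esub> p = \<one>\<^bsub>M\<^esub>} \<subseteq> {\<one>\<^bsub>M\<^esub>}"
    using assms prime_gt_0_nat unfolding torsion_free_def by blast
  thus ?thesis unfolding finite_p_rank_def by (rule finite_subset) simp
qed

lemma finite_torsion_free_rank_iff: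
  "finite_torsion_free_rank M \<longleftrightarrow> (\<exists>r. rank_bounded_in M (carrier M) r)"
proof -
  have "S \<subseteq> carrier M" if "Z_independent M S" for S
    using that unfolding Z_independent_def by (rule conjunct1)
  hence "rank_bounded_in M (carrier M) r \<longleftrightarrow> (\<forall>S. Z_independent M S \<longrightarrow> finite S \<and> card S \<le> r)" for r
    unfolding rank_bounded_in_def by blast
  thus ?thesis unfolding finite_torsion_free_rank_def by simp
qed

context coinduced_module
begin

definition supported_on :: "'g set set \<Rightarrow> ('g \<Rightarrow> 'm) set" where
  "supported_on C = {\<phi> \<in> carrier N. \<forall>x\<in>carrier G - \<Union>C. \<phi> x = \<one>\<^bsub>M\<^esub>}"

lemma subgroup_supported_on: "subgroup (supported_on C) N"
proof -
  interpret N: comm_group N by (rule comm_group_coinduced)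
  interpret M: comm_group M by (rule comm_group_M)
  show ?thesis
  proof (rule N.subgroupI)
    fix \<phi> assume \<phi>: "\<phi> \<in> supported_on C"
    hence "\<phi> \<in> carrier N" by (simp add: supported_on_def)
    with \<phi> show "inv\<^bsub>N\<^esub> \<phi> \<in> supported_on C"
      using N.inv_closed by (auto simp: supported_on_def inv_coinduced)
  next
    fix \<phi> \<psi> assume "\<phi> \<in> supported_on C" "\<psi> \<in> supported_on C"
    thus "\<phi> \<otimes>\<^bsub>N\<^esub> \<psi> \<in> supported_on C"
      using N.m_closed[of \<phi> \<psi>] by (auto simp: supported_on_def)
  qed (use N.one_closed in \<open>auto simp: supported_on_def\<close>)
qed

lemma supported_on_empty: "supported_on {} = {\<one>\<^bsub>N\<^esub>}"
proof -
  interpret N: comm_group N by (rule comm_group_coinduced)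
  have "\<phi> = \<one>\<^bsub>N\<^esub>" if "\<phi> \<in> supported_on {}" for \<phi>
  proof
    fix x show "\<phi> x = \<one>\<^bsub>N\<^esub> x"
      using that by (cases "x \<in> carrier G") (auto simp: supported_on_def carrier_coinduced)
  qed
  thus ?thesis using N.one_closed unfolding supported_on_def by auto
qed

lemma supported_on_rcosets: "supported_on (rcosets\<^bsub>G\<^esub> G0) = carrier N"
  using group.rcosets_part_G[OF group_G subgroup_G0] unfolding supported_on_def by auto

lemma eval_hom:
  assumes "S \<subseteq> carrier N"
  shows "(\<lambda>\<phi>. \<phi> t) \<in> hom (N\<lparr>carrier := S\<rparr>) M"
proof (rule homI)
  fix \<phi> assume "\<phi> \<in> carrier (N\<lparr>carrier := S\<rparr>)"
  hence "\<phi> \<in> carrier N" using assms by auto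
  thus "\<phi> t \<in> carrier M" by (simp add: carrier_coinduced)
qed simp

text \<open>An equivariant function vanishing at \<open>t\<close> vanishes on the whole coset \<open>G\<^sub>0 t\<close>.\<close>

lemma supported_on_insert_kernel:
  assumes t: "t \<in> carrier G" and c: "c = G0 #>\<^bsub>G\<^esub> t"
    and C: "C \<subseteq> rcosets\<^bsub>G\<^esub> G0" and cC: "c \<notin> C"
  shows "{\<phi> \<in> supported_on (insert c C). \<phi> t = \<one>\<^bsub>M\<^esub>} = supported_on C"
proof -
  interpret G: group G by (rule group_G)
  have "c \<in> rcosets\<^bsub>G\<^esub> G0" unfolding c using G.rcosetsI[OF subgroup.subset[OF subgroup_G0] t] .
  hence disj: "c \<inter> c' = {}" if "c' \<in> C" for c'
    using pairwiseD[OF G.rcos_disjoint[OF subgroup_G0], of c c'] that C cC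
    by (auto simp: disjnt_def)
  have tc: "t \<in> c" unfolding c using G.rcos_self[OF t subgroup_G0] .
  have vanish: "\<phi> x = \<one>\<^bsub>M\<^esub>" if "\<phi> \<in> carrier N" "\<phi> t = \<one>\<^bsub>M\<^esub>" "x \<in> c" for \<phi> x
  proof -
    obtain h where "h \<in> G0" "x = h \<otimes>\<^bsub>G\<^esub> t" using \<open>x \<in> c\<close> unfolding c r_coset_def by blast
    thus ?thesis using that t group_hom.hom_one[OF actM_group_hom] by (simp add: carrier_coinduced)
  qed
  show ?thesis
  proof (intro equalityI subsetI)
    fix \<phi> assume "\<phi> \<in> {\<phi> \<in> supported_on (insert c C). \<phi> t = \<one>\<^bsub>M\<^esub>}"
    hence \<phi>: "\<phi> \<in> carrier N" "\<phi> t = \<one>\<^bsub>M\<^esub>" "\<And>x. x \<in> carrier G - \<Union>(insert c C) \<Longrightarrow> \<phi> x = \<one>\<^bsub>M\<^esub>"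
      unfolding supported_on_def by blast+
    have "\<phi> x = \<one>\<^bsub>M\<^esub>" if x: "x \<in> carrier G - \<Union>C" for x
    proof (cases "x \<in> c")
      case True
      thus ?thesis using vanish[OF \<phi>(1,2)] by blast
    next
      case False
      thus ?thesis using \<phi>(3) x by blast
    qed
    thus "\<phi> \<in> supported_on C" using \<phi>(1) by (simp add: supported_on_def)
  next
    fix \<phi> assume \<phi>: "\<phi> \<in> supported_on C"
    have "t \<notin> \<Union>C" using disj tc by blast
    hence "\<phi> t = \<one>\<^bsub>M\<^esub>" using \<phi> t by (simp add: supported_on_def)
    with \<phi> show "\<phi> \<in> {\<phi> \<in> supported_on (insert c C). \<phi> t = \<one>\<^bsub>M\<^esub>}"
      unfolding supported_on_def by blast
  qed
qed

lemma eval_hom_supported_on: "(\<lambda>\<phi>. \<phi> t) \<in> hom (N\<lparr>carrier := supported_on C\<rparr>) M"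
  by (rule eval_hom) (auto simp: supported_on_def)

lemma rank_bounded_in_supported_on:
  assumes r: "rank_bounded_in M (carrier M) r" and "finite C" "C \<subseteq> rcosets\<^bsub>G\<^esub> G0"
  shows "rank_bounded_in N (supported_on C) (r * card C)"
  using assms(2,3)
proof (induction C rule: finite_subset_induct')
  case empty
  show ?case using rank_bounded_in_trivial[OF comm_group_coinduced] by (simp add: supported_on_empty)
next
  case (insert c C)
  then obtain t where t: "t \<in> carrier G" and c: "c = G0 #>\<^bsub>G\<^esub> t" unfolding RCOSETS_def by blast
  have "rank_bounded_in N {\<phi> \<in> supported_on (insert c C). \<phi> t = \<one>\<^bsub>M\<^esub>} (r * card C)"
    using insert.IH supported_on_insert_kernel[OF t c insert.hyps(3,4)] by simp
  hence "rank_bounded_in N (supported_on (insert c C)) (r + r * card C)"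
    by (rule rank_bounded_in_extension[OF comm_group_coinduced comm_group_M subgroup_supported_on
          eval_hom_supported_on r])
  thus ?case using insert.hyps by simp
qed

lemma has_prufer_section_in_supported_on:
  assumes p: "Factorial_Ring.prime p" and "finite C" "C \<subseteq> rcosets\<^bsub>G\<^esub> G0"
    and "has_prufer_section_in N (supported_on C) p"
  shows "has_prufer_section_in M (carrier M) p"
  using assms(2-4)
proof (induction C rule: finite_subset_induct')
  case empty
  thus ?case using not_has_prufer_section_in_trivial[OF p, of N] by (simp add: supported_on_empty)
next
  case (insert c C)
  then obtain t where t: "t \<in> carrier G" and c: "c = G0 #>\<^bsub>G\<^esub> t" unfolding RCOSETS_def by blast
  have "has_prufer_section_in M (carrier M) p \<or>
      has_prufer_section_in N {\<phi> \<in> supported_on (insert c C). \<phi> t = \<one>\<^bsub>M\<^esub>} p"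
    by (rule has_prufer_section_in_extension[OF comm_group_coinduced comm_group_M subgroup_supported_on
          eval_hom_supported_on p insert.prems])
  thus ?case using insert.IH supported_on_insert_kernel[OF t c insert.hyps(3,4)] by auto
qed

lemma torsion_free_coinduced:
  assumes "torsion_free M"
  shows "torsion_free N"
  unfolding torsion_free_def
proof (intro ballI allI impI)
  fix \<phi> and n :: nat assume \<phi>: "\<phi> \<in> carrier N" and n: "0 < n \<and> \<phi> [^]\<^bsub>N\<^esub> n = \<one>\<^bsub>N\<^esub>"
  have "\<phi> x = \<one>\<^bsub>M\<^esub>" for x
  proof -
    have "\<phi> x [^]\<^bsub>M\<^esub> n = \<one>\<^bsub>M\<^esub>" using n nat_pow_coinduced[of \<phi> n x] by simp
    moreover have "\<phi> x \<in> carrier M" using \<phi> by (simp add: carrier_coinduced)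
    ultimately show ?thesis using assms[unfolded torsion_free_def, rule_format, of "\<phi> x" n] n by simp
  qed
  thus "\<phi> = \<one>\<^bsub>N\<^esub>" by auto
qed

lemma finite_rank_coinduced:
  assumes "torsion_free M" "finite_rank M" "finite (rcosets\<^bsub>G\<^esub> G0)"
  shows "finite_rank N"
proof -
  obtain r where "rank_bounded_in M (carrier M) r"
    using assms(2) unfolding finite_rank_def finite_torsion_free_rank_iff by blast
  hence "rank_bounded_in N (carrier N) (r * card (rcosets\<^bsub>G\<^esub> G0))"
    using rank_bounded_in_supported_on[OF _ assms(3) subset_refl] by (simp add: supported_on_rcosets)
  hence "finite_torsion_free_rank N" unfolding finite_torsion_free_rank_iff ..
  thus ?thesis
    using torsion_free_imp_finite_p_rank[OF torsion_free_coinduced[OF assms(1)]]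
    unfolding finite_rank_def by blast
qed

lemma pi_spectral_coinduced:
  assumes "pi_spectral \<pi> M" "finite (rcosets\<^bsub>G\<^esub> G0)"
  shows "pi_spectral \<pi> N"
  unfolding pi_spectral_def
proof (intro allI impI)
  fix p assume p: "Factorial_Ring.prime p \<and> has_prufer_section N p"
  hence "has_prufer_section_in N (supported_on (rcosets\<^bsub>G\<^esub> G0)) p"
    by (simp add: has_prufer_section_iff[OF comm_group_coinduced] supported_on_rcosets)
  hence "has_prufer_section_in M (carrier M) p"
    by (rule has_prufer_section_in_supported_on[OF conjunct1[OF p] assms(2) subset_refl])
  hence "has_prufer_section M p" by (simp add: has_prufer_section_iff[OF comm_group_M])
  with p show "p \<in> \<pi>" using assms(1) unfolding pi_spectral_def by blast
qed

end

section \<open>The transfer epimorphism\<close>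

lemma (in group) bij_betw_r_coset_rcosets:
  assumes H: "subgroup H G" and g: "g \<in> carrier G"
  shows "bij_betw (\<lambda>c. c #> g) (rcosets H) (rcosets H)"
proof -
  have H_G: "H \<subseteq> carrier G" using subgroup.subset[OF H] .
  have closed: "c #> k \<in> rcosets H" if c: "c \<in> rcosets H" and k: "k \<in> carrier G" for c k
  proof -
    from c obtain a where "a \<in> carrier G" "c = H #> a" by (auto simp: RCOSETS_def)
    with k show ?thesis by (simp add: coset_mult_assoc[OF H_G] rcosetsI[OF H_G])
  qed
  have cancel: "c #> k #> inv k = c" if c: "c \<in> rcosets H" and k: "k \<in> carrier G" for c k
    using coset_mult_assoc[OF subgroup.rcosets_carrier[OF H is_group c] k] k
      subgroup.rcosets_carrier[OF H is_group c] by simp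
  show ?thesis
  proof (rule bij_betwI[where g = "\<lambda>c. c #> inv g"])
    show "(\<lambda>c. c #> g) \<in> rcosets H \<rightarrow> rcosets H" "(\<lambda>c. c #> inv g) \<in> rcosets H \<rightarrow> rcosets H"
      using closed g by auto
    fix c assume "c \<in> rcosets H"
    thus "c #> g #> inv g = c" "c #> inv g #> g = c"
      using cancel[of c g] cancel[of c "inv g"] g by simp_all
  qed
qed

locale coinduced_epi = coinduced_module G G0 M actM
  for G :: "'g monoid" and G0 :: "'g set" and M :: "'m monoid" and actM :: "'g \<Rightarrow> 'm \<Rightarrow> 'm" +
  fixes A :: "'a monoid" and actA :: "'g \<Rightarrow> 'a \<Rightarrow> 'a" and f :: "'m \<Rightarrow> 'a"
  assumes module_A: "G_module G A actA"
    and epi: "module_epi G0 M actM A actA f"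
    and finite_index: "finite (rcosets\<^bsub>G\<^esub> G0)"
begin

lemma comm_group_A: "comm_group A"
  using module_A unfolding G_module_def by blast

lemma actA_closed: "g \<in> carrier G \<Longrightarrow> x \<in> carrier A \<Longrightarrow> actA g x \<in> carrier A"
  using module_A unfolding G_module_def by simp

lemma actA_comp: "g \<in> carrier G \<Longrightarrow> h \<in> carrier G \<Longrightarrow> x \<in> carrier A \<Longrightarrow>
    actA (g \<otimes>\<^bsub>G\<^esub> h) x = actA g (actA h x)"
  using module_A unfolding G_module_def by simp

lemma actA_id: "x \<in> carrier A \<Longrightarrow> actA \<one>\<^bsub>G\<^esub> x = x"
  using module_A unfolding G_module_def by simp

lemma f_group_hom: "group_hom M A f"
  using epi comm_group_M comm_group_A
  by (simp add: module_epi_def group_hom_def group_hom_axioms_def comm_group.axioms(2))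

lemma f_equivariant: "h \<in> G0 \<Longrightarrow> x \<in> carrier M \<Longrightarrow> f (actM h x) = actA h (f x)"
  using epi unfolding module_epi_def by blast

lemma value_in_carrier: "\<phi> \<in> carrier N \<Longrightarrow> \<phi> x \<in> carrier M"
  by (simp add: carrier_coinduced)

lemma rcoset_subset: "c \<in> rcosets\<^bsub>G\<^esub> G0 \<Longrightarrow> c \<subseteq> carrier G"
  using subgroup.rcosets_carrier[OF subgroup_G0 group_G] .

definition coset_rep :: "'g set \<Rightarrow> 'g" where
  "coset_rep c = (SOME t. t \<in> c)"

lemma coset_rep_in:
  assumes "c \<in> rcosets\<^bsub>G\<^esub> G0"
  shows "coset_rep c \<in> c"
proof -
  from assms obtain a where "a \<in> carrier G" "c = G0 #>\<^bsub>G\<^esub> a" by (auto simp: RCOSETS_def)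
  hence "a \<in> c" using group.rcos_self[OF group_G _ subgroup_G0] by simp
  thus ?thesis unfolding coset_rep_def by (rule someI)
qed

lemma coset_rep_closed: "c \<in> rcosets\<^bsub>G\<^esub> G0 \<Longrightarrow> coset_rep c \<in> carrier G"
  using coset_rep_in rcoset_subset by blast

text \<open>The summand \<open>t\<inverse> f(\<phi> t)\<close> depends only on the coset \<open>G\<^sub>0 t\<close>, by \<open>G\<^sub>0\<close>-equivariance of \<open>\<phi>\<close>
  and \<open>f\<close>.\<close>

definition transfer_term :: "('g \<Rightarrow> 'm) \<Rightarrow> 'g \<Rightarrow> 'a" where
  "transfer_term \<phi> t = actA (inv\<^bsub>G\<^esub> t) (f (\<phi> t))"

definition transfer :: "('g \<Rightarrow> 'm) \<Rightarrow> 'a" where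
  "transfer \<phi> = (\<Otimes>\<^bsub>A\<^esub>c\<in>rcosets\<^bsub>G\<^esub> G0. transfer_term \<phi> (coset_rep c))"

lemma transfer_term_closed: "\<phi> \<in> carrier N \<Longrightarrow> t \<in> carrier G \<Longrightarrow> transfer_term \<phi> t \<in> carrier A"
  unfolding transfer_term_def using group_hom.hom_closed[OF f_group_hom]
  by (simp add: actA_closed group.inv_closed[OF group_G] value_in_carrier)

lemma transfer_terms_closed:
  "\<phi> \<in> carrier N \<Longrightarrow> (\<lambda>c. transfer_term \<phi> (coset_rep c)) \<in> rcosets\<^bsub>G\<^esub> G0 \<rightarrow> carrier A"
  using transfer_term_closed coset_rep_closed by blast

lemma transfer_term_left_mult:
  assumes \<phi>: "\<phi> \<in> carrier N" and h: "h \<in> G0" and t: "t \<in> carrier G"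
  shows "transfer_term \<phi> (h \<otimes>\<^bsub>G\<^esub> t) = transfer_term \<phi> t"
proof -
  interpret G: group G by (rule group_G)
  have hG: "h \<in> carrier G" using h subgroup.subset[OF subgroup_G0] by auto
  have fx: "f (\<phi> t) \<in> carrier A"
    using group_hom.hom_closed[OF f_group_hom value_in_carrier[OF \<phi>]] .
  have "transfer_term \<phi> (h \<otimes>\<^bsub>G\<^esub> t) = actA (inv\<^bsub>G\<^esub> (h \<otimes>\<^bsub>G\<^esub> t)) (actA h (f (\<phi> t)))"
    using \<phi> h t by (simp add: transfer_term_def carrier_coinduced f_equivariant)
  also have "\<dots> = actA (inv\<^bsub>G\<^esub> (h \<otimes>\<^bsub>G\<^esub> t) \<otimes>\<^bsub>G\<^esub> h) (f (\<phi> t))"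
    using actA_comp hG t fx by simp
  also have "inv\<^bsub>G\<^esub> (h \<otimes>\<^bsub>G\<^esub> t) \<otimes>\<^bsub>G\<^esub> h = inv\<^bsub>G\<^esub> t"
    using hG t by (simp add: G.inv_mult_group G.m_assoc)
  finally show ?thesis unfolding transfer_term_def .
qed

lemma transfer_term_coset:
  assumes \<phi>: "\<phi> \<in> carrier N" and c: "c \<in> rcosets\<^bsub>G\<^esub> G0" and "t \<in> c" "t' \<in> c"
  shows "transfer_term \<phi> t = transfer_term \<phi> t'"
proof -
  from c obtain a where a: "a \<in> carrier G" "c = G0 #>\<^bsub>G\<^esub> a" by (auto simp: RCOSETS_def)
  with \<open>t \<in> c\<close> \<open>t' \<in> c\<close> obtain h h' where "h \<in> G0" "t = h \<otimes>\<^bsub>G\<^esub> a" "h' \<in> G0" "t' = h' \<otimes>\<^bsub>G\<^esub> a"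
    unfolding r_coset_def by blast
  thus ?thesis using transfer_term_left_mult[OF \<phi> _ a(1)] by simp
qed

lemma transfer_hom: "transfer \<in> hom N A"
proof (rule homI)
  interpret A: comm_group A by (rule comm_group_A)
  fix \<phi> assume "\<phi> \<in> carrier N"
  thus "transfer \<phi> \<in> carrier A" unfolding transfer_def by (intro A.finprod_closed transfer_terms_closed)
next
  interpret A: comm_group A by (rule comm_group_A)
  interpret f: group_hom M A f by (rule f_group_hom)
  fix \<phi> \<psi> assume \<phi>: "\<phi> \<in> carrier N" and \<psi>: "\<psi> \<in> carrier N"
  have term_mult: "transfer_term (\<phi> \<otimes>\<^bsub>N\<^esub> \<psi>) t = transfer_term \<phi> t \<otimes>\<^bsub>A\<^esub> transfer_term \<psi> t"
    if "t \<in> carrier G" for t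
    using group_hom.hom_mult[OF G_module_group_hom[OF module_A]] \<phi> \<psi> that
    by (simp add: transfer_term_def value_in_carrier group.inv_closed[OF group_G])
  have "transfer (\<phi> \<otimes>\<^bsub>N\<^esub> \<psi>)
      = (\<Otimes>\<^bsub>A\<^esub>c\<in>rcosets\<^bsub>G\<^esub> G0. transfer_term \<phi> (coset_rep c) \<otimes>\<^bsub>A\<^esub> transfer_term \<psi> (coset_rep c))"
    unfolding transfer_def using transfer_terms_closed[OF \<phi>] transfer_terms_closed[OF \<psi>]
    by (intro A.finprod_cong') (auto simp: term_mult coset_rep_closed simp del: mult_coinduced)
  also have "\<dots> = transfer \<phi> \<otimes>\<^bsub>A\<^esub> transfer \<psi>"
    unfolding transfer_def using A.finprod_multf[OF transfer_terms_closed[OF \<phi>] transfer_terms_closed[OF \<psi>]] .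
  finally show "transfer (\<phi> \<otimes>\<^bsub>N\<^esub> \<psi>) = transfer \<phi> \<otimes>\<^bsub>A\<^esub> transfer \<psi>" .
qed

end

lemma (in coinduced_module) G0_supported_in_coinduced:
  assumes m: "m \<in> carrier M"
  shows "(\<lambda>x. if x \<in> G0 then actM x m else \<one>\<^bsub>M\<^esub>) \<in> carrier N"
proof -
  interpret G: group G by (rule group_G)
  interpret M: comm_group M by (rule comm_group_M)
  have G0: "G0 \<subseteq> carrier G" using subgroup.subset[OF subgroup_G0] .
  have left_mult: "h \<otimes>\<^bsub>G\<^esub> x \<in> G0 \<longleftrightarrow> x \<in> G0" if "h \<in> G0" "x \<in> carrier G" for h x
  proof
    assume "h \<otimes>\<^bsub>G\<^esub> x \<in> G0"
    hence "inv\<^bsub>G\<^esub> h \<otimes>\<^bsub>G\<^esub> (h \<otimes>\<^bsub>G\<^esub> x) \<in> G0"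
      using subgroup.m_closed[OF subgroup_G0 subgroup.m_inv_closed[OF subgroup_G0 that(1)]] by blast
    thus "x \<in> G0" using that G0 by (simp add: G.m_assoc[symmetric] subsetD)
  qed (use subgroup.m_closed[OF subgroup_G0 that(1)] in blast)
  show ?thesis
    using m actM_closed G0 left_mult actM_comp group_hom.hom_one[OF actM_group_hom]
    by (auto simp: carrier_coinduced)
qed

context coinduced_epi
begin

lemma transfer_G0_supported:
  assumes m: "m \<in> carrier M"
  shows "transfer (\<lambda>x. if x \<in> G0 then actM x m else \<one>\<^bsub>M\<^esub>) = f m"
proof -
  interpret G: group G by (rule group_G)
  interpret A: comm_group A by (rule comm_group_A)
  define \<phi> where "\<phi> = (\<lambda>x. if x \<in> G0 then actM x m else \<one>\<^bsub>M\<^esub>)"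
  have \<phi>: "\<phi> \<in> carrier N" unfolding \<phi>_def using G0_supported_in_coinduced[OF m] .
  have G0_coset: "G0 \<in> rcosets\<^bsub>G\<^esub> G0"
    using G.rcosetsI[OF subgroup.subset[OF subgroup_G0] G.one_closed] G.coset_mult_one[OF subgroup.subset[OF subgroup_G0]]
    by simp
  have "transfer_term \<phi> (coset_rep c) = \<one>\<^bsub>A\<^esub>" if c: "c \<in> rcosets\<^bsub>G\<^esub> G0" "c \<noteq> G0" for c
  proof -
    have "coset_rep c \<notin> G0"
      using coset_rep_in[OF c(1)] pairwiseD[OF G.rcos_disjoint[OF subgroup_G0] c(1) G0_coset c(2)]
      by (auto simp: disjnt_def)
    thus ?thesis
      using group_hom.hom_one[OF f_group_hom] group_hom.hom_one[OF G_module_group_hom[OF module_A]]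
        coset_rep_closed[OF c(1)]
      by (simp add: transfer_term_def \<phi>_def)
  qed
  hence "transfer \<phi> = (\<Otimes>\<^bsub>A\<^esub>c\<in>{G0}. transfer_term \<phi> (coset_rep c))"
    unfolding transfer_def
    by (intro A.finprod_mono_neutral_cong_right) (use finite_index G0_coset transfer_terms_closed[OF \<phi>] in auto)
  also have "\<dots> = transfer_term \<phi> (coset_rep G0)"
    using transfer_term_closed[OF \<phi> coset_rep_closed[OF G0_coset]] by simp
  also have "\<dots> = transfer_term \<phi> \<one>\<^bsub>G\<^esub>"
    using transfer_term_coset[OF \<phi> G0_coset coset_rep_in[OF G0_coset]] subgroup.one_closed[OF subgroup_G0]
    by simp
  also have "\<dots> = f m"
    using subgroup.one_closed[OF subgroup_G0] actM_id[OF m] actA_id group_hom.hom_closed[OF f_group_hom m]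
    by (simp add: transfer_term_def \<phi>_def)
  finally show ?thesis unfolding \<phi>_def .
qed

lemma transfer_surj: "transfer ` carrier N = carrier A"
proof
  show "transfer ` carrier N \<subseteq> carrier A" using transfer_hom by (auto simp: hom_def)
next
  show "carrier A \<subseteq> transfer ` carrier N"
  proof
    fix a assume "a \<in> carrier A"
    hence "a \<in> f ` carrier M" using epi by (simp add: module_epi_def)
    then obtain m where m: "m \<in> carrier M" and "a = f m" by blast
    hence "a = transfer (\<lambda>x. if x \<in> G0 then actM x m else \<one>\<^bsub>M\<^esub>)"
      by (simp add: transfer_G0_supported)
    with G0_supported_in_coinduced[OF m] show "a \<in> transfer ` carrier N" by blast
  qed
qed

lemma transfer_term_coinduced_act:
  assumes g: "g \<in> carrier G" and \<phi>: "\<phi> \<in> carrier N" and c: "c \<in> rcosets\<^bsub>G\<^esub> G0"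
  shows "transfer_term (coinduced_act G M g \<phi>) (coset_rep c)
    = actA g (transfer_term \<phi> (coset_rep (c #>\<^bsub>G\<^esub> g)))"
proof -
  interpret G: group G by (rule group_G)
  define t where "t = coset_rep c"
  have t: "t \<in> carrier G" unfolding t_def using coset_rep_closed[OF c] .
  have cg: "c #>\<^bsub>G\<^esub> g \<in> rcosets\<^bsub>G\<^esub> G0"
    using G.bij_betw_r_coset_rcosets[OF subgroup_G0 g] c by (auto simp: bij_betw_def)
  have "t \<otimes>\<^bsub>G\<^esub> g \<in> c #>\<^bsub>G\<^esub> g"
    unfolding t_def r_coset_def using coset_rep_in[OF c] by blast
  hence "transfer_term \<phi> (coset_rep (c #>\<^bsub>G\<^esub> g)) = transfer_term \<phi> (t \<otimes>\<^bsub>G\<^esub> g)"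
    using transfer_term_coset[OF \<phi> cg coset_rep_in[OF cg]] by blast
  hence "actA g (transfer_term \<phi> (coset_rep (c #>\<^bsub>G\<^esub> g)))
      = actA (g \<otimes>\<^bsub>G\<^esub> inv\<^bsub>G\<^esub> (t \<otimes>\<^bsub>G\<^esub> g)) (f (\<phi> (t \<otimes>\<^bsub>G\<^esub> g)))"
    using actA_comp g t group_hom.hom_closed[OF f_group_hom value_in_carrier[OF \<phi>]]
    by (simp add: transfer_term_def)
  also have "g \<otimes>\<^bsub>G\<^esub> inv\<^bsub>G\<^esub> (t \<otimes>\<^bsub>G\<^esub> g) = inv\<^bsub>G\<^esub> t"
    using t g by (simp add: G.inv_mult_group G.m_assoc[symmetric])
  finally show ?thesis using t by (simp add: t_def transfer_term_def coinduced_act_def)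
qed

lemma transfer_equivariant:
  assumes g: "g \<in> carrier G" and \<phi>: "\<phi> \<in> carrier N"
  shows "transfer (coinduced_act G M g \<phi>) = actA g (transfer \<phi>)"
proof -
  interpret A: comm_group A by (rule comm_group_A)
  define T where "T c = transfer_term \<phi> (coset_rep c)" for c
  have T: "T \<in> rcosets\<^bsub>G\<^esub> G0 \<rightarrow> carrier A" unfolding T_def using transfer_terms_closed[OF \<phi>] .
  have bij: "bij_betw (\<lambda>c. c #>\<^bsub>G\<^esub> g) (rcosets\<^bsub>G\<^esub> G0) (rcosets\<^bsub>G\<^esub> G0)"
    by (rule group.bij_betw_r_coset_rcosets[OF group_G subgroup_G0 g])
  hence T_shifted: "(\<lambda>c. T (c #>\<^bsub>G\<^esub> g)) \<in> rcosets\<^bsub>G\<^esub> G0 \<rightarrow> carrier A"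
    using T by (auto simp: bij_betw_def)
  have "transfer (coinduced_act G M g \<phi>) = (\<Otimes>\<^bsub>A\<^esub>c\<in>rcosets\<^bsub>G\<^esub> G0. actA g (T (c #>\<^bsub>G\<^esub> g)))"
    unfolding transfer_def T_def using transfer_term_coinduced_act[OF g \<phi>] actA_closed[OF g] T_shifted
    by (intro A.finprod_cong') (auto simp: T_def)
  also have "\<dots> = actA g (\<Otimes>\<^bsub>A\<^esub>c\<in>rcosets\<^bsub>G\<^esub> G0. T (c #>\<^bsub>G\<^esub> g))"
    using hom_finprod[OF comm_group_A comm_group_A G_module_act_hom[OF module_A g] T_shifted]
    by (simp add: comp_def)
  also have "(\<Otimes>\<^bsub>A\<^esub>c\<in>rcosets\<^bsub>G\<^esub> G0. T (c #>\<^bsub>G\<^esub> g)) = transfer \<phi>"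
    unfolding transfer_def T_def[symmetric]
    using A.finprod_reindex[OF _ bij_betw_imp_inj_on[OF bij], of T] T bij_betw_imp_surj_on[OF bij]
    by (simp add: comp_def)
  finally show ?thesis .
qed

lemma module_epi_transfer: "module_epi (carrier G) N (coinduced_act G M) A actA transfer"
  unfolding module_epi_def using transfer_hom transfer_surj transfer_equivariant by blast

end

theorem lemma4p3:
  fixes \<pi> :: "nat set"
    and G :: "'g monoid" and G0 :: "'g set"
    and A :: "'a monoid" and actA :: "'g \<Rightarrow> 'a \<Rightarrow> 'a"
    and M :: "'m monoid" and actM :: "'g \<Rightarrow> 'm \<Rightarrow> 'm" and f :: "'m \<Rightarrow> 'a"
  assumes "\<forall>p\<in>\<pi>. Factorial_Ring.prime p"
    and "group G"
    and "subgroup G0 G"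
    and "finite (rcosets\<^bsub>G\<^esub> G0)"
    and "G_module G A actA"
    and "G_module (G\<lparr>carrier := G0\<rparr>) M actM"
    and "torsion_free M" and "finite_rank M" and "pi_spectral \<pi> M"
    and "module_epi G0 M actM A actA f"
  shows "\<exists>(N :: ('g \<Rightarrow> 'm) monoid) actN \<phi>.
           G_module G N actN \<and> torsion_free N \<and> finite_rank N \<and> pi_spectral \<pi> N \<and>
           module_epi (carrier G) N actN A actA \<phi>"
proof -
  interpret coinduced_epi G G0 M actM A actA f
    using assms(2-6,10) by (simp add: coinduced_epi_def coinduced_module_def coinduced_epi_axioms_def)
  have "torsion_free N" by (rule torsion_free_coinduced[OF assms(7)])
  moreover have "finite_rank N" by (rule finite_rank_coinduced[OF assms(7,8,4)])
  moreover have "pi_spectral \<pi> N" by (rule pi_spectral_coinduced[OF assms(9,4)])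
  ultimately show ?thesis using G_module_coinduced module_epi_transfer by blast
qed

end
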